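(* Let $\mu:\mathbb{R}^{n\times n}\to\mathbb{R}$ be the matrix measure induced by a vector norm $|\cdot|$ on $\mathbb{R}^n$, and suppose $\mu$ satisfies any one of the following (equivalent) conditions: (1) $|\cdot|$ is orthant-monotonic; (2) $\mu(-D)\le 0$ for every $D\in\mathbb{D}^n_{\ge0}$; (3) $\mu(D)=\max_i\{d_{ii}\}$ for every $D\in\mathbb{D}^n_{\ge0}$; (4) there exists $A\in\mathbb{R}^{n\times n}$ with $\mu(A-D)<0$ for all $D\in\mathbb{D}^n_{\ge0}$. Then $\mu(D)=\max_i\{d_{ii}\}$ for every diagonal matrix $D\in\mathbb{R}^{n\times n}$ (with arbitrary real diagonal entries).
   Context: $\mathbb{D}^n_{\ge 0}$ denotes the set of $n\times n$ diagonal matrices with nonnegative diagonal entries. For a vector norm $|\cdot|$ on $\mathbb{R}^n$, the induced matrix norm is $\|A\|=\max_{|x|=1}|Ax|$ and the induced matrix measure is $\mu(A)=\lim_{\varepsilon\to0^+}(\|I_n+\varepsilon A\|-1)/\varepsilon$. A norm $|\cdot|$ on $\mathbb{R}^n$ is orthant-monotonic if for all $x,y\in\mathbb{R}^n$: whenever $x_iy_i\ge 0$ and $|x_i|\le|y_i|$ for all $i$, then $|x|\le|y|$. *)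

theory Defs
  imports "HOL-Analysis.Analysis"
begin

definition is_vnorm :: "(real ^ 'n \<Rightarrow> real) \<Rightarrow> bool" where
  "is_vnorm N \<longleftrightarrow>
     (\<forall>x. 0 \<le> N x) \<and> (\<forall>x. N x = 0 \<longleftrightarrow> x = 0) \<and>
     (\<forall>c x. N (c *s x) = \<bar>c\<bar> * N x) \<and> (\<forall>x y. N (x + y) \<le> N x + N y)"

definition ind_norm :: "(real ^ 'n \<Rightarrow> real) \<Rightarrow> real ^ 'n ^ 'n \<Rightarrow> real" where
  "ind_norm N A = Sup ((\<lambda>x. N (A *v x)) ` {x. N x = 1})"

definition mat_measure :: "(real ^ 'n \<Rightarrow> real) \<Rightarrow> real ^ 'n ^ 'n \<Rightarrow> real" where
  "mat_measure N A = Lim (at_right 0) (\<lambda>e. (ind_norm N (mat 1 + e *\<^sub>R A) - 1) / e)"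

definition orthant_monotonic :: "(real ^ 'n \<Rightarrow> real) \<Rightarrow> bool" where
  "orthant_monotonic N \<longleftrightarrow>
     (\<forall>x y. (\<forall>i. x $ i * y $ i \<ge> 0 \<and> \<bar>x $ i\<bar> \<le> \<bar>y $ i\<bar>) \<longrightarrow> N x \<le> N y)"

definition is_diag :: "real ^ 'n ^ 'n \<Rightarrow> bool" where
  "is_diag D \<longleftrightarrow> (\<forall>i j. i \<noteq> j \<longrightarrow> D $ i $ j = 0)"

definition nonneg_diag :: "real ^ 'n ^ 'n \<Rightarrow> bool" where
  "nonneg_diag D \<longleftrightarrow> is_diag D \<and> (\<forall>i. 0 \<le> D $ i $ i)"

definition max_diag :: "real ^ 'n ^ 'n \<Rightarrow> real" where
  "max_diag D = Max (range (\<lambda>i. D $ i $ i))"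

end

theory Submission
  imports Defs
begin

text \<open>
  All four hypotheses imply \<open>\<mu>(-D) \<le> 0\<close> for every \<open>D \<in> \<bbbD>\<^sup>n\<^sub>\<ge>\<^sub>0\<close>: for (1), \<open>I - \<epsilon>D\<close> only
  shrinks the coordinates of a vector without changing their signs when \<open>\<epsilon>\<close> is small, so
  \<open>\<parallel>I - \<epsilon>D\<parallel> \<le> 1\<close>; for (3), write \<open>-D = (dI - D) - dI\<close> with \<open>d = max\<^sub>i d\<^sub>i\<^sub>i\<close> and use
  subadditivity of \<open>\<mu>\<close>; for (4), \<open>\<mu>(-D) > 0\<close> would make \<open>\<mu>(A - tD) \<ge> t \<mu>(-D) - \<mu>(-A)\<close>
  positive for large \<open>t\<close>. Given this, an arbitrary diagonal \<open>D\<close> is \<open>dI - (dI - D)\<close> with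
  \<open>dI - D \<in> \<bbbD>\<^sup>n\<^sub>\<ge>\<^sub>0\<close>, so \<open>\<mu>(D) \<le> \<mu>(dI) + \<mu>(-(dI - D)) \<le> d\<close>, while the standard basis vector
  at a maximal diagonal entry is an eigenvector for the eigenvalue \<open>d\<close>, which gives \<open>\<mu>(D) \<ge> d\<close>.
\<close>

subsection \<open>Vector norms\<close>

locale vector_norm =
  fixes N :: "real ^ 'n \<Rightarrow> real"
  assumes is_vnorm: "is_vnorm N"
begin

lemma vnorm_nonneg: "0 \<le> N x"
  using is_vnorm by (simp add: is_vnorm_def)

lemma vnorm_eq_0_iff: "N x = 0 \<longleftrightarrow> x = 0"
  using is_vnorm by (simp add: is_vnorm_def)

lemma vnorm_pos: "x \<noteq> 0 \<Longrightarrow> 0 < N x"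
  using vnorm_nonneg vnorm_eq_0_iff by (simp add: less_le)

lemma vnorm_scaleR: "N (c *\<^sub>R x) = \<bar>c\<bar> * N x"
  using is_vnorm by (simp add: is_vnorm_def scalar_mult_eq_scaleR)

lemma vnorm_triangle: "N (x + y) \<le> N x + N y"
  using is_vnorm by (simp add: is_vnorm_def)

lemma vnorm_minus: "N (- x) = N x"
  using vnorm_scaleR[of "-1" x] by simp

lemma vnorm_abs_diff_le: "\<bar>N x - N y\<bar> \<le> N (x - y)"
  using vnorm_triangle[of "x - y" y] vnorm_triangle[of "y - x" x] vnorm_minus[of "x - y"]
  by simp

lemma vnorm_sum_le: "finite S \<Longrightarrow> N (sum f S) \<le> (\<Sum>i\<in>S. N (f i))"
proof (induction S rule: finite_induct)
  case empty
  then show ?case using vnorm_eq_0_iff[of 0] by simp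
next
  case (insert a S)
  then show ?case using vnorm_triangle[of "f a" "sum f S"] by simp
qed

lemma vnorm_normalize: "x \<noteq> 0 \<Longrightarrow> N ((1 / N x) *\<^sub>R x) = 1"
  using vnorm_pos[of x] by (simp add: vnorm_scaleR)

lemma vnorm_unit_exists: "\<exists>x. N x = 1"
  using vnorm_normalize[of "axis undefined 1"] by auto

lemma vnorm_le_norm: "\<exists>K>0. \<forall>x. N x \<le> K * norm x"
proof -
  define K where "K = 1 + (\<Sum>i\<in>UNIV. N (axis i 1))"
  have "N x \<le> K * norm x" for x
  proof -
    have "N x = N (\<Sum>i\<in>UNIV. x $ i *\<^sub>R axis i 1)"
      using basis_expansion[of x] by (simp add: scalar_mult_eq_scaleR)
    also have "\<dots> \<le> (\<Sum>i\<in>UNIV. N (x $ i *\<^sub>R axis i 1))"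
      by (rule vnorm_sum_le) simp
    also have "\<dots> = (\<Sum>i\<in>UNIV. \<bar>x $ i\<bar> * N (axis i 1))"
      by (simp add: vnorm_scaleR)
    also have "\<dots> \<le> (\<Sum>i\<in>UNIV. norm x * N (axis i 1))"
      by (intro sum_mono mult_right_mono) (auto simp: component_le_norm_cart vnorm_nonneg)
    also have "\<dots> \<le> K * norm x"
      by (simp add: K_def sum_distrib_left algebra_simps)
    finally show ?thesis .
  qed
  moreover have "K > 0"
    unfolding K_def by (simp add: add_pos_nonneg sum_nonneg vnorm_nonneg)
  ultimately show ?thesis by blast
qed

lemma norm_le_vnorm: "\<exists>c>0. \<forall>x. c * norm x \<le> N x"
proof -
  obtain K where K: "K > 0" "\<And>x. N x \<le> K * norm x"
    using vnorm_le_norm by blast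
  have "K-lipschitz_on UNIV N"
  proof (rule lipschitz_onI)
    fix x y
    have "dist (N x) (N y) \<le> N (x - y)"
      using vnorm_abs_diff_le by (simp add: dist_real_def)
    also have "\<dots> \<le> K * dist x y"
      using K(2) by (simp add: dist_norm)
    finally show "dist (N x) (N y) \<le> K * dist x y" .
  qed (use K in simp)
  then have "continuous_on (sphere 0 1) N"
    using lipschitz_on_continuous_on continuous_on_subset by blast
  moreover have "sphere (0 :: real ^ 'n) 1 \<noteq> {}"
    by simp
  ultimately obtain z where z: "z \<in> sphere 0 1" "\<And>y. y \<in> sphere 0 1 \<Longrightarrow> N z \<le> N y"
    using continuous_attains_inf[OF compact_sphere] by blast
  have "N z * norm x \<le> N x" for x
  proof (cases "x = 0")
    case False
    then have "N z \<le> N ((1 / norm x) *\<^sub>R x)"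
      by (intro z(2)) simp
    also have "\<dots> = N x / norm x"
      by (simp add: vnorm_scaleR)
    finally show ?thesis
      using False by (simp add: field_simps)
  qed (simp add: vnorm_nonneg)
  moreover have "N z > 0"
    using z(1) by (intro vnorm_pos) auto
  ultimately show ?thesis by blast
qed

subsection \<open>The induced matrix norm\<close>

lemma bdd_above_ind_norm: "bdd_above ((\<lambda>x. N (X *v x)) ` {x. N x = 1})"
proof -
  obtain K where K: "K > 0" "\<And>x. N x \<le> K * norm x"
    using vnorm_le_norm by blast
  obtain c where c: "c > 0" "\<And>x. c * norm x \<le> N x"
    using norm_le_vnorm by blast
  obtain B where B: "B > 0" "\<And>x. norm (X *v x) \<le> norm x * B"
    using bounded_linear.pos_bounded[OF matrix_vector_mul_bounded_linear] by blast
  have "N (X *v x) \<le> K * (B / c)" if "N x = 1" for x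
  proof -
    have "norm x * B \<le> B / c"
      using c(2)[of x] B(1) that c(1) by (simp add: field_simps)
    then show ?thesis
      using K(2)[of "X *v x"] B(2)[of x] K(1) by (meson mult_left_mono less_imp_le order_trans)
  qed
  then show ?thesis
    unfolding bdd_above_def by blast
qed

lemma ind_norm_upper: "N x = 1 \<Longrightarrow> N (X *v x) \<le> ind_norm N X"
  unfolding ind_norm_def by (rule cSup_upper) (auto intro: bdd_above_ind_norm)

lemma ind_norm_least: "(\<And>x. N x = 1 \<Longrightarrow> N (X *v x) \<le> M) \<Longrightarrow> ind_norm N X \<le> M"
  unfolding ind_norm_def using vnorm_unit_exists by (intro cSup_least) auto

lemma ind_norm_triangle: "ind_norm N (X + Y) \<le> ind_norm N X + ind_norm N Y"
proof (rule ind_norm_least)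
  fix x
  assume "N x = 1"
  then show "N ((X + Y) *v x) \<le> ind_norm N X + ind_norm N Y"
    using vnorm_triangle[of "X *v x" "Y *v x"] ind_norm_upper[of x X] ind_norm_upper[of x Y]
    by (simp add: matrix_vector_mult_add_rdistrib)
qed

lemma ind_norm_scaleR_le: "ind_norm N (c *\<^sub>R X) \<le> \<bar>c\<bar> * ind_norm N X"
proof (rule ind_norm_least)
  fix x
  assume "N x = 1"
  then show "N ((c *\<^sub>R X) *v x) \<le> \<bar>c\<bar> * ind_norm N X"
    using ind_norm_upper[of x X]
    by (simp add: scaleR_matrix_vector_assoc[symmetric] vnorm_scaleR mult_left_mono)
qed

lemma ind_norm_ge_eigenvalue:
  assumes "u \<noteq> 0" and "X *v u = l *\<^sub>R u"
  shows "\<bar>l\<bar> \<le> ind_norm N X"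
proof -
  define v where "v = (1 / N u) *\<^sub>R u"
  have v: "N v = 1"
    using vnorm_normalize[OF assms(1)] by (simp add: v_def)
  moreover have "X *v v = l *\<^sub>R v"
    using assms(2) by (simp add: v_def matrix_vector_mult_scaleR)
  ultimately show ?thesis
    using ind_norm_upper[OF v, of X] by (simp add: vnorm_scaleR)
qed

lemma ind_norm_mat_1: "ind_norm N (mat 1) = 1"
  using ind_norm_least[of "mat 1" 1] ind_norm_ge_eigenvalue[of "axis undefined 1" "mat 1" 1]
  by simp

subsection \<open>The matrix measure\<close>

definition measure_quotient :: "real ^ 'n ^ 'n \<Rightarrow> real \<Rightarrow> real" where
  "measure_quotient A e = (ind_norm N (mat 1 + e *\<^sub>R A) - 1) / e"

lemma measure_quotient_lower:
  assumes "e > 0"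
  shows "- ind_norm N A \<le> measure_quotient A e"
proof -
  have "ind_norm N (mat 1) = ind_norm N ((mat 1 + e *\<^sub>R A) + (- e) *\<^sub>R A)"
    by simp
  also have "\<dots> \<le> ind_norm N (mat 1 + e *\<^sub>R A) + ind_norm N ((- e) *\<^sub>R A)"
    by (rule ind_norm_triangle)
  also have "\<dots> \<le> ind_norm N (mat 1 + e *\<^sub>R A) + e * ind_norm N A"
    using ind_norm_scaleR_le[of "- e" A] assms by simp
  finally show ?thesis
    using assms by (simp add: ind_norm_mat_1 measure_quotient_def field_simps)
qed

text \<open>Convexity of the induced norm makes the quotient nondecreasing in \<open>e\<close>.\<close>

lemma measure_quotient_mono:
  assumes "0 < e1" "e1 \<le> e2"
  shows "measure_quotient A e1 \<le> measure_quotient A e2"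
proof -
  define t where "t = e1 / e2"
  have t: "0 < t" "t \<le> 1"
    using assms by (auto simp: t_def)
  have convex_comb: "mat 1 + e1 *\<^sub>R A = t *\<^sub>R (mat 1 + e2 *\<^sub>R A) + (1 - t) *\<^sub>R mat 1"
    using assms by (simp add: t_def algebra_simps)
  have "ind_norm N (mat 1 + e1 *\<^sub>R A)
      \<le> \<bar>t\<bar> * ind_norm N (mat 1 + e2 *\<^sub>R A) + \<bar>1 - t\<bar> * ind_norm N (mat 1)"
    unfolding convex_comb using ind_norm_triangle[of "t *\<^sub>R (mat 1 + e2 *\<^sub>R A)" "(1 - t) *\<^sub>R mat 1"]
      ind_norm_scaleR_le[of t "mat 1 + e2 *\<^sub>R A"] ind_norm_scaleR_le[of "1 - t" "mat 1"]
    by linarith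
  then have "ind_norm N (mat 1 + e1 *\<^sub>R A) - 1 \<le> t * (ind_norm N (mat 1 + e2 *\<^sub>R A) - 1)"
    using t by (simp add: ind_norm_mat_1 algebra_simps)
  then show ?thesis
    using assms by (simp add: measure_quotient_def t_def field_simps)
qed

lemma tendsto_measure_quotient:
  "(measure_quotient A \<longlongrightarrow> Inf (measure_quotient A ` {0<..})) (at_right 0)"
  using Lim_right_bound[of UNIV 0 "measure_quotient A" "- ind_norm N A"]
  by (simp add: measure_quotient_mono measure_quotient_lower)

lemma mat_measure_eq_Inf: "mat_measure N A = Inf (measure_quotient A ` {0<..})"
  using tendsto_measure_quotient[of A]
  unfolding mat_measure_def measure_quotient_def[abs_def] by (rule tendsto_Lim[rotated]) simp

lemma mat_measure_tendsto: "(measure_quotient A \<longlongrightarrow> mat_measure N A) (at_right 0)"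
  using tendsto_measure_quotient by (simp add: mat_measure_eq_Inf)

lemma mat_measure_le_quotient: "e > 0 \<Longrightarrow> mat_measure N A \<le> measure_quotient A e"
  unfolding mat_measure_eq_Inf
  by (rule cInf_lower) (auto intro!: bdd_belowI2 measure_quotient_lower)

lemma mat_measure_greatest:
  "(\<And>e. e > 0 \<Longrightarrow> L \<le> measure_quotient A e) \<Longrightarrow> L \<le> mat_measure N A"
  unfolding mat_measure_eq_Inf by (rule cInf_greatest) auto

lemma measure_quotient_add_le:
  assumes "e > 0"
  shows "measure_quotient (X + Y) (e / 2) \<le> measure_quotient X e + measure_quotient Y e"
proof -
  have "mat 1 + (e / 2) *\<^sub>R (X + Y) = (1/2) *\<^sub>R (mat 1 + e *\<^sub>R X) + (1/2) *\<^sub>R (mat 1 + e *\<^sub>R Y)"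
    by (simp add: algebra_simps flip: scaleR_add_left)
  then have "ind_norm N (mat 1 + (e / 2) *\<^sub>R (X + Y))
      \<le> (ind_norm N (mat 1 + e *\<^sub>R X) + ind_norm N (mat 1 + e *\<^sub>R Y)) / 2"
    using ind_norm_triangle[of "(1/2) *\<^sub>R (mat 1 + e *\<^sub>R X)" "(1/2) *\<^sub>R (mat 1 + e *\<^sub>R Y)"]
      ind_norm_scaleR_le[of "1/2" "mat 1 + e *\<^sub>R X"] ind_norm_scaleR_le[of "1/2" "mat 1 + e *\<^sub>R Y"]
    by simp
  note ineq = this
  have "measure_quotient (X + Y) (e / 2) = 2 * (ind_norm N (mat 1 + (e / 2) *\<^sub>R (X + Y)) - 1) / e"
    using assms by (simp add: measure_quotient_def field_simps)
  also have "\<dots> \<le> ((ind_norm N (mat 1 + e *\<^sub>R X) - 1) + (ind_norm N (mat 1 + e *\<^sub>R Y) - 1)) / e"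
    using assms ineq by (intro divide_right_mono) auto
  also have "\<dots> = measure_quotient X e + measure_quotient Y e"
    unfolding measure_quotient_def by (rule add_divide_distrib)
  finally show ?thesis .
qed

lemma mat_measure_add_le: "mat_measure N (X + Y) \<le> mat_measure N X + mat_measure N Y"
proof (rule tendsto_lowerbound)
  show "((\<lambda>e. measure_quotient X e + measure_quotient Y e)
      \<longlongrightarrow> mat_measure N X + mat_measure N Y) (at_right 0)"
    by (intro tendsto_add mat_measure_tendsto)
  show "\<forall>\<^sub>F e in at_right 0. mat_measure N (X + Y) \<le> measure_quotient X e + measure_quotient Y e"
    using eventually_at_right_less
  proof (rule eventually_mono)
    fix e :: real
    assume "0 < e"
    then have "mat_measure N (X + Y) \<le> measure_quotient (X + Y) (e / 2)"
      by (intro mat_measure_le_quotient) simp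
    also have "\<dots> \<le> measure_quotient X e + measure_quotient Y e"
      using \<open>0 < e\<close> by (rule measure_quotient_add_le)
    finally show "mat_measure N (X + Y) \<le> measure_quotient X e + measure_quotient Y e" .
  qed
qed simp

lemma mat_measure_scaleR_ge:
  assumes "t > 0"
  shows "t * mat_measure N X \<le> mat_measure N (t *\<^sub>R X)"
proof (rule mat_measure_greatest)
  fix e :: real
  assume "e > 0"
  then have "t * mat_measure N X \<le> t * measure_quotient X (e * t)"
    using assms mat_measure_le_quotient by simp
  also have "\<dots> = measure_quotient (t *\<^sub>R X) e"
    using \<open>e > 0\<close> assms by (simp add: measure_quotient_def field_simps)
  finally show "t * mat_measure N X \<le> measure_quotient (t *\<^sub>R X) e" .
qed

lemma mat_measure_scaleR: "t > 0 \<Longrightarrow> mat_measure N (t *\<^sub>R X) = t * mat_measure N X"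
  using mat_measure_scaleR_ge[of t X] mat_measure_scaleR_ge[of "1 / t" "t *\<^sub>R X"]
  by (simp add: field_simps)

lemma mat_measure_ge_eigenvalue:
  assumes "u \<noteq> 0" and "A *v u = l *\<^sub>R u"
  shows "l \<le> mat_measure N A"
proof (rule mat_measure_greatest)
  fix e :: real
  assume "e > 0"
  have "(mat 1 + e *\<^sub>R A) *v u = (1 + e * l) *\<^sub>R u"
    using assms(2) by (simp add: matrix_vector_mult_add_rdistrib algebra_simps
        flip: scaleR_matrix_vector_assoc)
  then have "1 + e * l \<le> ind_norm N (mat 1 + e *\<^sub>R A)"
    using ind_norm_ge_eigenvalue[OF assms(1)] by force
  then show "l \<le> measure_quotient A e"
    using \<open>e > 0\<close> by (simp add: measure_quotient_def field_simps)
qed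

lemma mat_measure_scalar_mat: "mat_measure N (c *\<^sub>R mat 1) = c"
proof (rule antisym)
  define e where "e = 1 / (1 + \<bar>c\<bar>)"
  have "e > 0" "1 + e * c > 0"
    unfolding e_def by (auto simp: field_simps abs_if add_pos_nonneg)
  have "ind_norm N (mat 1 + e *\<^sub>R (c *\<^sub>R mat 1)) = ind_norm N ((1 + e * c) *\<^sub>R mat 1)"
    by (simp add: algebra_simps)
  also have "\<dots> \<le> 1 + e * c"
    using ind_norm_scaleR_le[of "1 + e * c" "mat 1"] \<open>1 + e * c > 0\<close> by (simp add: ind_norm_mat_1)
  finally have "measure_quotient (c *\<^sub>R mat 1) e \<le> c"
    using \<open>e > 0\<close> by (simp add: measure_quotient_def field_simps)
  then show "mat_measure N (c *\<^sub>R mat 1) \<le> c"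
    using mat_measure_le_quotient[OF \<open>e > 0\<close>] by (rule order_trans[rotated])
  show "c \<le> mat_measure N (c *\<^sub>R mat 1)"
    by (rule mat_measure_ge_eigenvalue[of "axis undefined 1"]) (simp_all flip: scaleR_matrix_vector_assoc)
qed

end

subsection \<open>Diagonal matrices\<close>

lemma max_diag_ge: "D $ i $ i \<le> max_diag D"
  unfolding max_diag_def by (rule Max_ge) auto

lemma max_diag_attained: "\<exists>k. max_diag D = D $ k $ k"
proof -
  have "max_diag D \<in> range (\<lambda>i. D $ i $ i)"
    unfolding max_diag_def by (rule Max_in) auto
  then show ?thesis by auto
qed

lemma max_diag_least: "(\<And>i. D $ i $ i \<le> c) \<Longrightarrow> max_diag D \<le> c"
  unfolding max_diag_def by (subst Max_le_iff) auto

lemma max_diag_nonneg: "nonneg_diag D \<Longrightarrow> 0 \<le> max_diag D"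
  using max_diag_ge[of D undefined] unfolding nonneg_diag_def by (meson order_trans)

lemma diag_mult_vec_nth:
  assumes "is_diag D"
  shows "(D *v x) $ i = D $ i $ i * x $ i"
proof -
  have "(D *v x) $ i = (\<Sum>j\<in>UNIV. D $ i $ j * x $ j)"
    by (simp add: matrix_vector_mult_def)
  also have "\<dots> = (\<Sum>j\<in>UNIV. if j = i then D $ i $ i * x $ i else 0)"
    by (rule sum.cong) (use assms in \<open>auto simp: is_diag_def\<close>)
  finally show ?thesis by simp
qed

lemma diag_mult_axis: "is_diag D \<Longrightarrow> D *v axis k 1 = D $ k $ k *\<^sub>R axis k 1"
  by (simp add: vec_eq_iff diag_mult_vec_nth axis_def)

lemma nonneg_diag_max_diag_minus:
  "is_diag D \<Longrightarrow> nonneg_diag (max_diag D *\<^sub>R mat 1 - D)"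
  using max_diag_ge[of D] by (auto simp: nonneg_diag_def is_diag_def mat_def)

lemma max_diag_max_diag_minus_le:
  "nonneg_diag D \<Longrightarrow> max_diag (max_diag D *\<^sub>R mat 1 - D) \<le> max_diag D"
  by (rule max_diag_least) (simp add: nonneg_diag_def mat_def)

subsection \<open>Reduction to \<open>\<mu>(-D) \<le> 0\<close>\<close>

lemma orthant_monotonic_shrink_le:
  assumes "orthant_monotonic N" and "\<And>i. 0 \<le> c i \<and> c i \<le> 1"
  shows "N (\<chi> i. c i * x $ i) \<le> N x"
proof -
  have "0 \<le> c i * x $ i * x $ i \<and> \<bar>c i * x $ i\<bar> \<le> \<bar>x $ i\<bar>" for i
    using assms(2)[of i] by (simp add: mult.assoc abs_mult mult_left_le_one_le)
  then show ?thesis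
    using assms(1) unfolding orthant_monotonic_def by simp
qed

context vector_norm
begin

lemma orthant_monotonic_imp_mat_measure_neg_diag_nonpos:
  assumes "orthant_monotonic N" and "nonneg_diag D"
  shows "mat_measure N (- D) \<le> 0"
proof -
  define e where "e = 1 / (1 + max_diag D)"
  have "e > 0"
    using max_diag_nonneg[OF assms(2)] by (simp add: e_def)
  have shrink: "0 \<le> 1 - e * D $ i $ i \<and> 1 - e * D $ i $ i \<le> 1" for i
  proof -
    have "e * D $ i $ i \<le> e * max_diag D"
      using \<open>e > 0\<close> max_diag_ge[of D i] by simp
    also have "\<dots> \<le> 1"
      using max_diag_nonneg[OF assms(2)] by (simp add: e_def field_simps)
    finally show ?thesis
      using \<open>e > 0\<close> assms(2) by (simp add: nonneg_diag_def)
  qed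
  have action: "(mat 1 + e *\<^sub>R (- D)) *v x = (\<chi> i. (1 - e * D $ i $ i) * x $ i)" for x
    using assms(2) unfolding nonneg_diag_def
    by (simp add: vec_eq_iff matrix_vector_mult_add_rdistrib diag_mult_vec_nth algebra_simps
        flip: scaleR_matrix_vector_assoc)
  have "ind_norm N (mat 1 + e *\<^sub>R (- D)) \<le> 1"
  proof (rule ind_norm_least)
    fix x
    assume "N x = 1"
    then show "N ((mat 1 + e *\<^sub>R (- D)) *v x) \<le> 1"
      using orthant_monotonic_shrink_le[OF assms(1), of "\<lambda>i. 1 - e * D $ i $ i" x] shrink
      unfolding action by simp
  qed
  then have "measure_quotient (- D) e \<le> 0"
    using \<open>e > 0\<close> by (simp add: measure_quotient_def divide_nonpos_pos)
  then show ?thesis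
    using mat_measure_le_quotient[OF \<open>e > 0\<close>, of "- D"] by linarith
qed

lemma mat_measure_nonneg_diag_eq_max_imp_neg_diag_nonpos:
  assumes "\<forall>D. nonneg_diag D \<longrightarrow> mat_measure N D = max_diag D" and "nonneg_diag D"
  shows "mat_measure N (- D) \<le> 0"
proof -
  define d where "d = max_diag D"
  have "mat_measure N (- D) = mat_measure N ((d *\<^sub>R mat 1 - D) + (- d) *\<^sub>R mat 1)"
    by simp
  also have "\<dots> \<le> mat_measure N (d *\<^sub>R mat 1 - D) + mat_measure N ((- d) *\<^sub>R mat 1)"
    by (rule mat_measure_add_le)
  also have "\<dots> \<le> d + - d"
  proof -
    have "is_diag D"
      using assms(2) by (simp add: nonneg_diag_def)
    then have "mat_measure N (d *\<^sub>R mat 1 - D) \<le> d"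
      using assms max_diag_max_diag_minus_le[of D] nonneg_diag_max_diag_minus[of D]
      unfolding d_def by simp
    then show ?thesis
      using mat_measure_scalar_mat[of "- d"] by linarith
  qed
  finally show ?thesis by simp
qed

lemma mat_measure_shift_neg_imp_neg_diag_nonpos:
  assumes "\<forall>D. nonneg_diag D \<longrightarrow> mat_measure N (A - D) < 0" and "nonneg_diag D"
  shows "mat_measure N (- D) \<le> 0"
proof (rule ccontr)
  assume "\<not> ?thesis"
  then have pos: "mat_measure N (- D) > 0" by simp
  define t where "t = (\<bar>mat_measure N (- A)\<bar> + 1) / mat_measure N (- D)"
  have "t > 0"
    using pos by (simp add: t_def add_pos_nonneg)
  then have "nonneg_diag (t *\<^sub>R D)"
    using assms(2) by (auto simp: nonneg_diag_def is_diag_def)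
  have "\<bar>mat_measure N (- A)\<bar> + 1 = mat_measure N (t *\<^sub>R (- D))"
    using pos \<open>t > 0\<close> by (simp add: mat_measure_scaleR t_def del: scaleR_minus_right)
  also have "\<dots> = mat_measure N ((A - t *\<^sub>R D) + (- A))"
    by simp
  also have "\<dots> \<le> mat_measure N (A - t *\<^sub>R D) + mat_measure N (- A)"
    by (rule mat_measure_add_le)
  also have "\<dots> < mat_measure N (- A)"
    using assms(1) \<open>nonneg_diag (t *\<^sub>R D)\<close> by simp
  finally show False by linarith
qed

lemma neg_diag_nonpos_imp_mat_measure_diag_eq_max:
  assumes "\<forall>D. nonneg_diag D \<longrightarrow> mat_measure N (- D) \<le> 0" and "is_diag D"
  shows "mat_measure N D = max_diag D"
proof (rule antisym)
  define d where "d = max_diag D"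
  have "mat_measure N D = mat_measure N (d *\<^sub>R mat 1 + - (d *\<^sub>R mat 1 - D))"
    by simp
  also have "\<dots> \<le> mat_measure N (d *\<^sub>R mat 1) + mat_measure N (- (d *\<^sub>R mat 1 - D))"
    by (rule mat_measure_add_le)
  also have "\<dots> \<le> d"
    using assms(1) nonneg_diag_max_diag_minus[OF assms(2)] mat_measure_scalar_mat[of d]
    unfolding d_def by fastforce
  finally show "mat_measure N D \<le> max_diag D"
    by (simp add: d_def)
  obtain k where "max_diag D = D $ k $ k"
    using max_diag_attained by blast
  then show "max_diag D \<le> mat_measure N D"
    using diag_mult_axis[OF assms(2), of k] by (intro mat_measure_ge_eigenvalue[of "axis k 1"]) simp_all
qed

end

theorem corollary1:
  fixes N :: "real ^ 'n \<Rightarrow> real"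
  assumes "is_vnorm N"
    and "orthant_monotonic N
         \<or> (\<forall>D. nonneg_diag D \<longrightarrow> mat_measure N (- D) \<le> 0)
         \<or> (\<forall>D. nonneg_diag D \<longrightarrow> mat_measure N D = max_diag D)
         \<or> (\<exists>A. \<forall>D. nonneg_diag D \<longrightarrow> mat_measure N (A - D) < 0)"
  shows "\<forall>D. is_diag D \<longrightarrow> mat_measure N D = max_diag D"
proof -
  interpret vector_norm N
    using assms(1) by unfold_locales
  have "\<forall>D. nonneg_diag D \<longrightarrow> mat_measure N (- D) \<le> 0"
    using assms(2) orthant_monotonic_imp_mat_measure_neg_diag_nonpos
      mat_measure_nonneg_diag_eq_max_imp_neg_diag_nonpos mat_measure_shift_neg_imp_neg_diag_nonpos by blast
  then show ?thesis
    using neg_diag_nonpos_imp_mat_measure_diag_eq_max by blast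
qed

end
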